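(* Let $\Lambda$ be a row-finite $k$-graph with no sources and $R$ a commutative ring with $1$. Let $a$ be a nonzero element of the center $Z(\mathrm{KP}_R(\Lambda))$, written in normal form $a=\sum_{(\alpha,\beta)\in F}r_{\alpha,\beta}s_\alpha s_{\beta^*}$. Then: (1) for every $(\sigma,\tau)\in F$, $r(\sigma)=r(\tau)$; (2) setting $W=\{v\in\Lambda^0:\ v=r(\beta)\text{ for some }(\alpha,\beta)\in F\}$, if $\mu\in\Lambda$ satisfies $s(\mu)\in W$ then $r(\mu)\in W$; (3) for every $(\sigma,\tau)\in F$ there is $(\alpha,\beta)\in F$ with $r(\alpha)=r(\beta)=s(\sigma)=s(\tau)$; (4) there exist $l\in\mathbb{N}\setminus\{0\}$ and $(\alpha_1,\beta_1),\dots,(\alpha_l,\beta_l)\in F$ such that the composite $\beta_1\cdots\beta_l$ is defined and is a closed path, i.e. $r(\beta_1\cdots\beta_l)=s(\beta_1\cdots\beta_l)$.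
   Context: A $k$-graph is a countable category $\Lambda$ with a functor $d:\Lambda\to\mathbb{N}^k$ ($\mathbb{N}^k$ a one-object category under addition) with unique factorization: whenever $d(\lambda)=m+n$ there are unique $\mu,\nu$ with $d(\mu)=m,d(\nu)=n,\lambda=\mu\nu$. $\Lambda^0$ = vertices (degree-$0$ morphisms), $\Lambda^n=d^{-1}(n)$, $r,s$ range and source, $\lambda\mu$ defined when $s(\lambda)=r(\mu)$, $v\Lambda^n=\{\lambda\in\Lambda^n:r(\lambda)=v\}$. Row-finite: $v\Lambda^n$ finite; no sources: $v\Lambda^n\ne\emptyset$. Kumjian-Pask $\Lambda$-family in an $R$-algebra $A$: $P:\Lambda^0\to A$, $S:\Lambda^{\ne0}\cup\{\lambda^*:\lambda\in\Lambda^{\neq0}\}\to A$ with (KP1) $P_v$ mutually orthogonal idempotents; (KP2) for $r(\mu)=s(\lambda)$: $S_\lambda S_\mu=S_{\lambda\mu}$, $S_{\mu^*}S_{\lambda^*}=S_{(\lambda\mu)^*}$, $P_{r(\lambda)}S_\lambda=S_\lambda=S_\lambda P_{s(\lambda)}$, $P_{s(\lambda)}S_{\lambda^*}=S_{\lambda^*}=S_{\lambda^*}P_{r(\lambda)}$; (KP3) $S_{\lambda^*}S_\mu=\delta_{\lambda,\mu}P_{s(\lambda)}$ when $d(\lambda)=d(\mu)$; (KP4) $P_v=\sum_{\lambda\in v\Lambda^n}S_\lambda S_{\lambda^*}$ for $n\ne0$. $\mathrm{KP}_R(\Lambda)$ is the $R$-algebra generated by a universal such family $(p,s)$; for a vertex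 $v$, $s_v=s_{v^*}=p_v$. Normal form: a nonzero $a\in\mathrm{KP}_R(\Lambda)$ is written in normal form $a=\sum_{(\alpha,\beta)\in F}r_{\alpha,\beta}s_\alpha s_{\beta^*}$ if there is $m\in\mathbb{N}^k$ with $F\subset\Lambda\times\Lambda^m$ finite, every $r_{\alpha,\beta}\in R\setminus\{0\}$, and $s(\alpha)=s(\beta)$ for all $(\alpha,\beta)\in F$. (Every nonzero element admits such a form.) *)

theory Defs
  imports "HOL-Algebra.QuotRing" "HOL-Library.Countable_Set"
begin

text \<open>A k-graph is given by its set of morphisms, range and source maps (whose
values are the identity morphisms = vertices), composition (comp l m = l m,
defined when src l = rng m) and the degree functor into N^k, where N^k is
represented as functions 'k => nat for a finite index type 'k (k = CARD('k)).\<close>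

record ('a, 'k) kgraph =
  kg_arr  :: "'a set"
  kg_rng  :: "'a \<Rightarrow> 'a"
  kg_src  :: "'a \<Rightarrow> 'a"
  kg_comp :: "'a \<Rightarrow> 'a \<Rightarrow> 'a"
  kg_deg  :: "'a \<Rightarrow> 'k \<Rightarrow> nat"

definition kg_vertices :: "('a, 'k) kgraph \<Rightarrow> 'a set" where
  "kg_vertices G = {v \<in> kg_arr G. kg_deg G v = (\<lambda>_. 0)}"

definition is_kgraph :: "('a, 'k::finite) kgraph \<Rightarrow> bool" where
  "is_kgraph G \<longleftrightarrow>
     countable (kg_arr G) \<and>
     (\<forall>l\<in>kg_arr G. kg_rng G l \<in> kg_vertices G \<and> kg_src G l \<in> kg_vertices G) \<and>
     (\<forall>v\<in>kg_vertices G. kg_rng G v = v \<and> kg_src G v = v) \<and>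
     (\<forall>l\<in>kg_arr G. \<forall>m\<in>kg_arr G. kg_src G l = kg_rng G m \<longrightarrow>
         kg_comp G l m \<in> kg_arr G \<and>
         kg_rng G (kg_comp G l m) = kg_rng G l \<and>
         kg_src G (kg_comp G l m) = kg_src G m \<and>
         kg_deg G (kg_comp G l m) = (\<lambda>i. kg_deg G l i + kg_deg G m i)) \<and>
     (\<forall>l\<in>kg_arr G. kg_comp G (kg_rng G l) l = l \<and> kg_comp G l (kg_src G l) = l) \<and>
     (\<forall>l\<in>kg_arr G. \<forall>m\<in>kg_arr G. \<forall>n\<in>kg_arr G.
         kg_src G l = kg_rng G m \<longrightarrow> kg_src G m = kg_rng G n \<longrightarrow>
         kg_comp G (kg_comp G l m) n = kg_comp G l (kg_comp G m n)) \<and>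
     (\<forall>l\<in>kg_arr G. \<forall>m n. kg_deg G l = (\<lambda>i. m i + n i) \<longrightarrow>
         (\<exists>!p. fst p \<in> kg_arr G \<and> snd p \<in> kg_arr G \<and>
               kg_src G (fst p) = kg_rng G (snd p) \<and>
               kg_deg G (fst p) = m \<and> kg_deg G (snd p) = n \<and>
               l = kg_comp G (fst p) (snd p)))"

definition row_finite :: "('a, 'k) kgraph \<Rightarrow> bool" where
  "row_finite G \<longleftrightarrow> (\<forall>v\<in>kg_vertices G. \<forall>n.
      finite {l \<in> kg_arr G. kg_rng G l = v \<and> kg_deg G l = n})"

definition no_sources :: "('a, 'k) kgraph \<Rightarrow> bool" where
  "no_sources G \<longleftrightarrow> (\<forall>v\<in>kg_vertices G. \<forall>n.
      {l \<in> kg_arr G. kg_rng G l = v \<and> kg_deg G l = n} \<noteq> {})"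

fun kg_comp_list :: "('a, 'k) kgraph \<Rightarrow> 'a list \<Rightarrow> 'a" where
  "kg_comp_list G [] = undefined"
| "kg_comp_list G [b] = b"
| "kg_comp_list G (b # bs) = kg_comp G b (kg_comp_list G bs)"

text \<open>Generators: Pg v = p_v, Sg l = s_l, Tg l = s_{l*}.\<close>
datatype 'a kpgen = Pg 'a | Sg 'a | Tg 'a

definition valid_gen :: "('a, 'k) kgraph \<Rightarrow> 'a kpgen \<Rightarrow> bool" where
  "valid_gen G g = (case g of
      Pg v \<Rightarrow> v \<in> kg_vertices G
    | Sg l \<Rightarrow> l \<in> kg_arr G \<and> kg_deg G l \<noteq> (\<lambda>_. 0)
    | Tg l \<Rightarrow> l \<in> kg_arr G \<and> kg_deg G l \<noteq> (\<lambda>_. 0))"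

text \<open>The free (noncommutative, unital) R-algebra on the valid generators:
finitely supported R-valued functions on words, with convolution product.\<close>

definition fa_carrier :: "('a, 'k) kgraph \<Rightarrow> ('a kpgen list \<Rightarrow> 'r::comm_ring_1) set" where
  "fa_carrier G = {f. finite {w. f w \<noteq> 0} \<and>
                      (\<forall>w. f w \<noteq> 0 \<longrightarrow> set w \<subseteq> Collect (valid_gen G))}"

definition fa_mult :: "('g list \<Rightarrow> 'r::comm_ring_1) \<Rightarrow> ('g list \<Rightarrow> 'r) \<Rightarrow> 'g list \<Rightarrow> 'r" where
  "fa_mult f g = (\<lambda>w. \<Sum>i\<le>length w. f (take i w) * g (drop i w))"

definition fa_mono :: "'r::comm_ring_1 \<Rightarrow> 'g list \<Rightarrow> 'g list \<Rightarrow> 'r" where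
  "fa_mono c w = (\<lambda>u. if u = w then c else 0)"

definition free_alg :: "('a, 'k) kgraph \<Rightarrow> ('a kpgen list \<Rightarrow> 'r::comm_ring_1) ring" where
  "free_alg G = \<lparr>carrier = fa_carrier G, mult = fa_mult, one = fa_mono 1 [],
                 zero = (\<lambda>_. 0), add = (\<lambda>f g w. f w + g w)\<rparr>"

text \<open>Convention s_v = s_{v*} = p_v for vertices.\<close>
definition sw :: "('a, 'k) kgraph \<Rightarrow> 'a \<Rightarrow> 'a kpgen list" where
  "sw G l = (if kg_deg G l = (\<lambda>_. 0) then [Pg l] else [Sg l])"

definition swstar :: "('a, 'k) kgraph \<Rightarrow> 'a \<Rightarrow> 'a kpgen list" where
  "swstar G l = (if kg_deg G l = (\<lambda>_. 0) then [Pg l] else [Tg l])"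

text \<open>The relations (KP1)-(KP4), each as an element lhs - rhs of the free algebra.
(KP2) is stated for all composable pairs, including vertices (with s_v = p_v),
which gives exactly the identities of (KP2) in the paper together with p_v p_v = p_v.\<close>
definition kp_rels :: "('a, 'k) kgraph \<Rightarrow> ('a kpgen list \<Rightarrow> 'r::comm_ring_1) set" where
  "kp_rels G =
     {(\<lambda>u. fa_mono 1 [Pg v, Pg w] u - (if v = w then fa_mono 1 [Pg v] u else 0)) | v w.
        v \<in> kg_vertices G \<and> w \<in> kg_vertices G}
   \<union> {(\<lambda>u. fa_mono 1 (sw G l @ sw G m) u - fa_mono 1 (sw G (kg_comp G l m)) u) | l m.
        l \<in> kg_arr G \<and> m \<in> kg_arr G \<and> kg_src G l = kg_rng G m}
   \<union> {(\<lambda>u. fa_mono 1 (swstar G m @ swstar G l) u - fa_mono 1 (swstar G (kg_comp G l m)) u) | l m.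
        l \<in> kg_arr G \<and> m \<in> kg_arr G \<and> kg_src G l = kg_rng G m}
   \<union> {(\<lambda>u. fa_mono 1 (swstar G l @ sw G m) u - (if l = m then fa_mono 1 [Pg (kg_src G l)] u else 0)) | l m.
        l \<in> kg_arr G \<and> m \<in> kg_arr G \<and> kg_deg G l = kg_deg G m \<and> kg_deg G l \<noteq> (\<lambda>_. 0)}
   \<union> {(\<lambda>u. fa_mono 1 [Pg v] u - (\<Sum>l\<in>{l \<in> kg_arr G. kg_rng G l = v \<and> kg_deg G l = n}.
                                     fa_mono 1 (sw G l @ swstar G l) u)) | v n.
        v \<in> kg_vertices G \<and> n \<noteq> (\<lambda>_. 0)}"

definition kp_ideal :: "('a, 'k) kgraph \<Rightarrow> ('a kpgen list \<Rightarrow> 'r::comm_ring_1) set" where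
  "kp_ideal G = genideal (free_alg G) (kp_rels G)"

definition KP :: "('a, 'k) kgraph \<Rightarrow> ('a kpgen list \<Rightarrow> 'r::comm_ring_1) set ring" where
  "KP G = free_alg G Quot kp_ideal G"

definition kp_class :: "('a, 'k) kgraph \<Rightarrow> ('a kpgen list \<Rightarrow> 'r::comm_ring_1) \<Rightarrow> ('a kpgen list \<Rightarrow> 'r) set" where
  "kp_class G f = a_r_coset (free_alg G) (kp_ideal G) f"

definition kp_scal :: "('a, 'k) kgraph \<Rightarrow> 'r::comm_ring_1 \<Rightarrow> ('a kpgen list \<Rightarrow> 'r) set" where
  "kp_scal G c = kp_class G (fa_mono c [])"

definition kp_s :: "('a, 'k) kgraph \<Rightarrow> 'a \<Rightarrow> ('a kpgen list \<Rightarrow> 'r::comm_ring_1) set" where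
  "kp_s G l = kp_class G (fa_mono 1 (sw G l))"

definition kp_sstar :: "('a, 'k) kgraph \<Rightarrow> 'a \<Rightarrow> ('a kpgen list \<Rightarrow> 'r::comm_ring_1) set" where
  "kp_sstar G l = kp_class G (fa_mono 1 (swstar G l))"

definition kp_center :: "('a, 'k) kgraph \<Rightarrow> ('a kpgen list \<Rightarrow> 'r::comm_ring_1) set set" where
  "kp_center G = {z \<in> carrier (KP G). \<forall>y\<in>carrier (KP G).
                     z \<otimes>\<^bsub>KP G\<^esub> y = y \<otimes>\<^bsub>KP G\<^esub> z}"

end

theory Submission
  imports Defs "HOL-Algebra.UnivPoly"
begin

text \<open>
  KP_R(\<Lambda>) acts on R-valued functions on \<Lambda> \<times> \<int>^k: p_v restricts to paths with range v,
  s_\<lambda>* prepends \<lambda> and s_\<lambda> strips an initial segment \<lambda>, shifting the \<int>^k-coordinate by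
  \<plusminus>d(\<lambda>). (KP1)-(KP3) hold exactly and (KP4) holds on paths of degree at least n, so this is
  a representation modulo the functions that vanish on all paths of sufficiently large degree.
  A central a = \<Sum> r_\<alpha>\<beta> s_\<alpha> s_\<beta>* therefore commutes, up to such functions, with every p_v,
  s_\<mu> and s_\<mu>*. Applying both sides to the indicator of the pairs (\<tau>\<mu>, d(\<tau>)) and evaluating
  at (\<sigma>\<mu>, d(\<sigma>)) for long \<mu> isolates the coefficient r_\<sigma>\<tau> \<noteq> 0; commuting with
  p_r(\<tau>), s_\<mu> and s_\<sigma>* gives (1), (2) and (3). As F is finite, following (3) from term to term
  eventually closes a cycle, which is (4).
\<close>

section \<open>The free algebra\<close>

definition splits :: "'g list \<Rightarrow> ('g list \<times> 'g list) set" where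
  "splits w = {(u, v). u @ v = w}"

lemma splits_eq_image: "splits w = (\<lambda>i. (take i w, drop i w)) ` {..length w}"
proof -
  have "(u, v) \<in> (\<lambda>i. (take i w, drop i w)) ` {..length w}" if "u @ v = w" for u v
    using that by (auto simp: image_iff intro!: bexI[of _ "length u"])
  then show ?thesis by (auto simp: splits_def)
qed

lemma finite_splits [simp]: "finite (splits w)"
  by (simp add: splits_eq_image)

lemma fa_mult_splits: "fa_mult x y w = (\<Sum>p\<in>splits w. x (fst p) * y (snd p))"
proof -
  have "inj_on (\<lambda>i. (take i w, drop i w)) {..length w}"
    by (auto simp: inj_on_def) (metis length_take min.absorb2)
  then show ?thesis
    by (simp add: fa_mult_def splits_eq_image sum.reindex)
qed

lemma fa_mult_assoc: "fa_mult (fa_mult x y) z = fa_mult x (fa_mult y z)"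
proof
  fix w
  have "fa_mult (fa_mult x y) z w =
      (\<Sum>(p, q)\<in>Sigma (splits w) (\<lambda>p. splits (fst p)). x (fst q) * y (snd q) * z (snd p))"
    by (simp add: fa_mult_splits sum_distrib_right sum.Sigma split_def)
  also have "\<dots> = (\<Sum>(p, q)\<in>Sigma (splits w) (\<lambda>p. splits (snd p)). x (fst p) * (y (fst q) * z (snd q)))"
    by (rule sum.reindex_bij_witness[where i="\<lambda>((u, q), (v, t)). ((u @ v, t), (u, v))"
                                         and j="\<lambda>((p, t), (u, v)). ((u, v @ t), (v, t))"])
       (auto simp: splits_def mult.assoc)
  also have "\<dots> = fa_mult x (fa_mult y z) w"
    by (simp add: fa_mult_splits sum_distrib_left sum.Sigma split_def)
  finally show "fa_mult (fa_mult x y) z w = fa_mult x (fa_mult y z) w" .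
qed

lemma fa_mult_one_left: "fa_mult (fa_mono 1 []) x = x"
proof
  fix w
  have "fa_mult (fa_mono 1 []) x w = (\<Sum>p\<in>splits w. if p = ([], w) then x w else 0)"
    by (auto simp: fa_mult_splits fa_mono_def splits_def intro: sum.cong)
  then show "fa_mult (fa_mono 1 []) x w = x w"
    by (simp add: sum.delta') (simp add: splits_def)
qed

lemma fa_mult_one_right: "fa_mult x (fa_mono 1 []) = x"
proof
  fix w
  have "fa_mult x (fa_mono 1 []) w = (\<Sum>p\<in>splits w. if p = (w, []) then x w else 0)"
    by (auto simp: fa_mult_splits fa_mono_def splits_def intro: sum.cong)
  then show "fa_mult x (fa_mono 1 []) w = x w"
    by (simp add: sum.delta') (simp add: splits_def)
qed

lemma fa_mult_add_left: "fa_mult (\<lambda>w. x w + y w) z = (\<lambda>w. fa_mult x z w + fa_mult y z w)"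
  by (simp add: fa_mult_def distrib_right sum.distrib)

lemma fa_mult_add_right: "fa_mult x (\<lambda>w. y w + z w) = (\<lambda>w. fa_mult x y w + fa_mult x z w)"
  by (simp add: fa_mult_def distrib_left sum.distrib)

definition fa_supp :: "('g list \<Rightarrow> 'r::zero) \<Rightarrow> 'g list set" where
  "fa_supp x = {w. x w \<noteq> 0}"

lemma fa_supp_mult_subset: "fa_supp (fa_mult x y) \<subseteq> (\<lambda>q. fst q @ snd q) ` (fa_supp x \<times> fa_supp y)"
proof
  fix w assume "w \<in> fa_supp (fa_mult x y)"
  then have "(\<Sum>p\<in>splits w. x (fst p) * y (snd p)) \<noteq> 0"
    by (simp add: fa_supp_def fa_mult_splits)
  then obtain p where "p \<in> splits w" "x (fst p) * y (snd p) \<noteq> 0"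
    by (meson sum.neutral)
  then show "w \<in> (\<lambda>q. fst q @ snd q) ` (fa_supp x \<times> fa_supp y)"
    by (auto simp: fa_supp_def splits_def image_iff intro!: bexI[of _ p])
       (metis mult_zero_left mult_zero_right)
qed

lemma fa_carrier_iff:
  "x \<in> fa_carrier G \<longleftrightarrow> finite (fa_supp x) \<and> (\<forall>w\<in>fa_supp x. set w \<subseteq> Collect (valid_gen G))"
  by (auto simp: fa_carrier_def fa_supp_def)

lemma fa_mono_closed: "set w \<subseteq> Collect (valid_gen G) \<Longrightarrow> fa_mono c w \<in> fa_carrier G"
  by (auto simp: fa_carrier_def fa_mono_def)

lemma fa_mult_closed:
  assumes "x \<in> fa_carrier G" "y \<in> fa_carrier G"
  shows "fa_mult x y \<in> fa_carrier G"
  using assms fa_supp_mult_subset[of x y] finite_subset[OF fa_supp_mult_subset[of x y]]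
  unfolding fa_carrier_iff by fastforce

lemma fa_pointwise_closed:
  assumes "x \<in> fa_carrier G" "y \<in> fa_carrier G" "h 0 0 = 0"
  shows "(\<lambda>w. h (x w) (y w)) \<in> fa_carrier G"
proof -
  have "fa_supp (\<lambda>w. h (x w) (y w)) \<subseteq> fa_supp x \<union> fa_supp y"
    using assms(3) by (auto simp: fa_supp_def)
  then show ?thesis
    using assms(1,2) unfolding fa_carrier_iff by (meson Un_iff finite_Un rev_finite_subset subsetD)
qed

lemma fa_add_closed: "x \<in> fa_carrier G \<Longrightarrow> y \<in> fa_carrier G \<Longrightarrow> (\<lambda>w. x w + y w) \<in> fa_carrier G"
  by (rule fa_pointwise_closed[where h = "(+)"]) simp_all

lemma fa_diff_closed: "x \<in> fa_carrier G \<Longrightarrow> y \<in> fa_carrier G \<Longrightarrow> (\<lambda>w. x w - y w) \<in> fa_carrier G"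
  by (rule fa_pointwise_closed[where h = "(-)"]) simp_all

lemma fa_zero_closed: "(\<lambda>_. 0) \<in> fa_carrier G"
  by (simp add: fa_carrier_def)

lemma fa_sum_closed:
  "finite L \<Longrightarrow> (\<And>l. l \<in> L \<Longrightarrow> x l \<in> fa_carrier G) \<Longrightarrow> (\<lambda>w. \<Sum>l\<in>L. x l w) \<in> fa_carrier G"
  by (induction L rule: finite_induct) (simp_all add: fa_zero_closed fa_add_closed)

lemma carrier_free_alg: "carrier (free_alg G) = fa_carrier G"
  by (simp add: free_alg_def)

lemma ring_free_alg: "ring (free_alg G)"
proof (rule ringI)
  show "abelian_group (free_alg G)"
  proof (rule abelian_groupI)
    fix x assume "x \<in> carrier (free_alg G)"
    then have "(\<lambda>w. - x w) \<in> carrier (free_alg G)"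
      by (auto simp: free_alg_def fa_carrier_def)
    then show "\<exists>y\<in>carrier (free_alg G). y \<oplus>\<^bsub>free_alg G\<^esub> x = \<zero>\<^bsub>free_alg G\<^esub>"
      by (auto simp: free_alg_def intro!: bexI[of _ "\<lambda>w. - x w"])
  qed (auto simp: free_alg_def fa_add_closed fa_zero_closed add.assoc add.commute)
  show "monoid (free_alg G)"
    by (rule monoidI)
       (auto simp: free_alg_def fa_mult_closed fa_mono_closed fa_mult_assoc
                   fa_mult_one_left fa_mult_one_right)
qed (auto simp: free_alg_def fa_mult_add_left fa_mult_add_right)

section \<open>k-graphs\<close>

locale kgraph =
  fixes G :: "('a, 'k::finite) kgraph"
  assumes is_kgraph: "is_kgraph G"
begin

abbreviation "arr \<equiv> kg_arr G"
abbreviation "rng \<equiv> kg_rng G"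
abbreviation "src \<equiv> kg_src G"
abbreviation "cmp \<equiv> kg_comp G"
abbreviation "degree \<equiv> kg_deg G"

lemma kgraph_axioms:
  shows "\<forall>l\<in>arr. rng l \<in> kg_vertices G \<and> src l \<in> kg_vertices G"
    and "\<forall>v\<in>kg_vertices G. rng v = v \<and> src v = v"
    and "\<forall>l\<in>arr. \<forall>m\<in>arr. src l = rng m \<longrightarrow> cmp l m \<in> arr \<and> rng (cmp l m) = rng l \<and>
           src (cmp l m) = src m \<and> degree (cmp l m) = (\<lambda>i. degree l i + degree m i)"
    and "\<forall>l\<in>arr. cmp (rng l) l = l"
    and "\<forall>l\<in>arr. \<forall>m\<in>arr. \<forall>n\<in>arr. src l = rng m \<longrightarrow> src m = rng n \<longrightarrow>
           cmp (cmp l m) n = cmp l (cmp m n)"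
    and "\<forall>l\<in>arr. \<forall>m n. degree l = (\<lambda>i. m i + n i) \<longrightarrow>
           (\<exists>!p. fst p \<in> arr \<and> snd p \<in> arr \<and> src (fst p) = rng (snd p) \<and>
                 degree (fst p) = m \<and> degree (snd p) = n \<and> l = cmp (fst p) (snd p))"
  using is_kgraph unfolding is_kgraph_def by simp_all

lemma rng_in_vertices: "l \<in> arr \<Longrightarrow> rng l \<in> kg_vertices G"
  and src_in_vertices: "l \<in> arr \<Longrightarrow> src l \<in> kg_vertices G"
  and vertex_src: "v \<in> kg_vertices G \<Longrightarrow> src v = v"
  using kgraph_axioms(1,2) by blast+

lemma vertexI: "l \<in> arr \<Longrightarrow> degree l = (\<lambda>_. 0) \<Longrightarrow> l \<in> kg_vertices G"
  and vertex_arr: "v \<in> kg_vertices G \<Longrightarrow> v \<in> arr"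
  by (simp_all add: kg_vertices_def)

lemma comp_arr: "l \<in> arr \<Longrightarrow> m \<in> arr \<Longrightarrow> src l = rng m \<Longrightarrow> cmp l m \<in> arr"
  and rng_comp [simp]: "l \<in> arr \<Longrightarrow> m \<in> arr \<Longrightarrow> src l = rng m \<Longrightarrow> rng (cmp l m) = rng l"
  and src_comp [simp]: "l \<in> arr \<Longrightarrow> m \<in> arr \<Longrightarrow> src l = rng m \<Longrightarrow> src (cmp l m) = src m"
  and degree_comp: "l \<in> arr \<Longrightarrow> m \<in> arr \<Longrightarrow> src l = rng m \<Longrightarrow>
                   degree (cmp l m) = (\<lambda>i. degree l i + degree m i)"
  using kgraph_axioms(3) by blast+

lemma comp_rng_left [simp]: "l \<in> arr \<Longrightarrow> cmp (rng l) l = l"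
  using kgraph_axioms(4) by blast

lemma comp_assoc:
  "l \<in> arr \<Longrightarrow> m \<in> arr \<Longrightarrow> n \<in> arr \<Longrightarrow> src l = rng m \<Longrightarrow> src m = rng n \<Longrightarrow>
   cmp (cmp l m) n = cmp l (cmp m n)"
  using kgraph_axioms(5) by blast

lemma unique_factorization:
  "l \<in> arr \<Longrightarrow> degree l = (\<lambda>i. m i + n i) \<Longrightarrow>
   \<exists>!p. fst p \<in> arr \<and> snd p \<in> arr \<and> src (fst p) = rng (snd p) \<and>
        degree (fst p) = m \<and> degree (snd p) = n \<and> l = cmp (fst p) (snd p)"
  using kgraph_axioms(6) by blast

lemma factorization_unique:
  assumes "l \<in> arr" "m \<in> arr" "l' \<in> arr" "m' \<in> arr" "src l = rng m" "src l' = rng m'"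
    and "cmp l m = cmp l' m'" "degree l = degree l'"
  shows "l = l' \<and> m = m'"
proof -
  have d: "degree (cmp l m) = (\<lambda>i. degree l i + degree m i)"
    "degree (cmp l' m') = (\<lambda>i. degree l' i + degree m' i)"
    using degree_comp[OF assms(1,2,5)] degree_comp[OF assms(3,4,6)] .
  have "degree m = degree m'"
  proof
    fix i
    show "degree m i = degree m' i"
      using fun_cong[OF d(1), of i] fun_cong[OF d(2), of i] assms(7,8) by simp
  qed
  let ?P = "\<lambda>p. fst p \<in> arr \<and> snd p \<in> arr \<and> src (fst p) = rng (snd p) \<and>
      degree (fst p) = degree l \<and> degree (snd p) = degree m \<and> cmp l m = cmp (fst p) (snd p)"
  have "\<exists>!p. ?P p"
    using assms by (intro unique_factorization comp_arr d(1))
  moreover have "?P (l, m)" "?P (l', m')"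
    using assms \<open>degree m = degree m'\<close> by simp_all
  ultimately have "(l, m) = (l', m')"
    by (metis (no_types, lifting) ex1E)
  then show ?thesis by simp
qed

lemma factorization_exists:
  assumes "\<nu> \<in> arr" "\<And>i. n i \<le> degree \<nu> i"
  obtains l m where "l \<in> arr" "m \<in> arr" "src l = rng m" "degree l = n" "\<nu> = cmp l m"
proof -
  have "degree \<nu> = (\<lambda>i. n i + (degree \<nu> i - n i))"
    using assms(2) by (simp add: fun_eq_iff)
  from unique_factorization[OF assms(1) this] obtain p where
    "fst p \<in> arr" "snd p \<in> arr" "src (fst p) = rng (snd p)" "degree (fst p) = n"
    "\<nu> = cmp (fst p) (snd p)"
    by blast
  then show ?thesis by (rule that)
qed

end

definition kg_extends :: "('a, 'k) kgraph \<Rightarrow> 'a \<Rightarrow> 'a \<Rightarrow> bool" where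
  "kg_extends G l \<nu> \<longleftrightarrow> (\<exists>\<mu>\<in>kg_arr G. kg_rng G \<mu> = kg_src G l \<and> \<nu> = kg_comp G l \<mu>)"

text \<open>The residual \<mu> of \<nu> = l \<mu> is meaningful only when kg_extends G l \<nu>; otherwise it is an
  unspecified THE-value.\<close>

definition kg_residual :: "('a, 'k) kgraph \<Rightarrow> 'a \<Rightarrow> 'a \<Rightarrow> 'a" where
  "kg_residual G l \<nu> = (THE \<mu>. \<mu> \<in> kg_arr G \<and> kg_rng G \<mu> = kg_src G l \<and> \<nu> = kg_comp G l \<mu>)"

context kgraph
begin

lemma kg_residual_comp [simp]:
  assumes "l \<in> arr" "\<mu> \<in> arr" "rng \<mu> = src l"
  shows "kg_residual G l (cmp l \<mu>) = \<mu>"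
  unfolding kg_residual_def
proof (rule the_equality)
  fix \<mu>' assume "\<mu>' \<in> arr \<and> rng \<mu>' = src l \<and> cmp l \<mu> = cmp l \<mu>'"
  then have "l = l \<and> \<mu> = \<mu>'"
    using assms by (intro factorization_unique) simp_all
  then show "\<mu>' = \<mu>" by simp
qed (use assms in simp)

lemma kg_extendsI: "\<mu> \<in> arr \<Longrightarrow> rng \<mu> = src l \<Longrightarrow> kg_extends G l (cmp l \<mu>)"
  unfolding kg_extends_def by blast

lemma kg_extendsE:
  assumes "kg_extends G l \<nu>" "l \<in> arr"
  obtains "kg_residual G l \<nu> \<in> arr" "rng (kg_residual G l \<nu>) = src l" "\<nu> = cmp l (kg_residual G l \<nu>)"
  using assms unfolding kg_extends_def by auto

lemma kg_extends_arr_rng: "kg_extends G l \<nu> \<Longrightarrow> l \<in> arr \<Longrightarrow> \<nu> \<in> arr \<and> rng \<nu> = rng l"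
  by (auto simp: kg_extends_def comp_arr)

lemma kg_extends_vertex: "v \<in> kg_vertices G \<Longrightarrow> kg_extends G v \<nu> \<longleftrightarrow> \<nu> \<in> arr \<and> rng \<nu> = v"
  unfolding kg_extends_def using vertex_src by (metis comp_rng_left)

lemma kg_residual_vertex: "v \<in> kg_vertices G \<Longrightarrow> \<nu> \<in> arr \<Longrightarrow> rng \<nu> = v \<Longrightarrow> kg_residual G v \<nu> = \<nu>"
  using kg_residual_comp[of v \<nu>] vertex_arr vertex_src by (metis comp_rng_left)

lemma kg_extends_comp:
  assumes "l \<in> arr" "m \<in> arr" "src l = rng m"
  shows "kg_extends G (cmp l m) \<nu> \<longleftrightarrow> kg_extends G l \<nu> \<and> kg_extends G m (kg_residual G l \<nu>)"
proof
  assume "kg_extends G (cmp l m) \<nu>"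
  then obtain \<rho> where \<rho>: "\<rho> \<in> arr" "rng \<rho> = src m" "\<nu> = cmp l (cmp m \<rho>)"
    using assms by (auto simp: kg_extends_def comp_assoc)
  then have "cmp m \<rho> \<in> arr" "rng (cmp m \<rho>) = src l"
    using assms by (simp_all add: comp_arr)
  with \<rho> show "kg_extends G l \<nu> \<and> kg_extends G m (kg_residual G l \<nu>)"
    using assms by (simp add: kg_extendsI)
next
  assume "kg_extends G l \<nu> \<and> kg_extends G m (kg_residual G l \<nu>)"
  then obtain \<mu> \<rho> where \<mu>: "\<mu> \<in> arr" "rng \<mu> = src l" "\<nu> = cmp l \<mu>"
    and \<rho>: "\<rho> \<in> arr" "rng \<rho> = src m" "\<mu> = cmp m \<rho>"
    using assms by (auto simp: kg_extends_def)
  then have "\<nu> = cmp (cmp l m) \<rho>"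
    using assms by (simp add: comp_assoc)
  then show "kg_extends G (cmp l m) \<nu>"
    using \<rho> assms by (simp add: kg_extendsI)
qed

lemma kg_residual_comp_split:
  assumes "l \<in> arr" "m \<in> arr" "src l = rng m" "kg_extends G (cmp l m) \<nu>"
  shows "kg_residual G (cmp l m) \<nu> = kg_residual G m (kg_residual G l \<nu>)"
proof -
  obtain \<rho> where \<rho>: "\<rho> \<in> arr" "rng \<rho> = src (cmp l m)" "\<nu> = cmp (cmp l m) \<rho>"
    using assms(4) by (auto simp: kg_extends_def)
  then have "rng \<rho> = src m"
    using assms by simp
  have "kg_residual G (cmp l m) \<nu> = \<rho>"
    using \<rho> assms by (simp add: comp_arr)
  moreover have "kg_residual G l \<nu> = cmp m \<rho>"
    using \<rho> \<open>rng \<rho> = src m\<close> assms by (simp add: comp_assoc comp_arr)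
  ultimately show ?thesis
    using \<rho> \<open>rng \<rho> = src m\<close> assms by simp
qed

end

section \<open>Functions on paths\<close>

definition gen_dom :: "('a, 'k) kgraph \<Rightarrow> 'a kpgen \<Rightarrow> 'a \<times> ('k \<Rightarrow> int) \<Rightarrow> bool" where
  "gen_dom G g p = (case g of
      Pg v \<Rightarrow> fst p \<in> kg_arr G \<and> kg_rng G (fst p) = v
    | Sg l \<Rightarrow> kg_extends G l (fst p)
    | Tg l \<Rightarrow> fst p \<in> kg_arr G \<and> kg_rng G (fst p) = kg_src G l)"

definition gen_map :: "('a, 'k) kgraph \<Rightarrow> 'a kpgen \<Rightarrow> 'a \<times> ('k \<Rightarrow> int) \<Rightarrow> 'a \<times> ('k \<Rightarrow> int)" where
  "gen_map G g p = (case g of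
      Pg v \<Rightarrow> p
    | Sg l \<Rightarrow> (kg_residual G l (fst p), \<lambda>i. snd p i - int (kg_deg G l i))
    | Tg l \<Rightarrow> (kg_comp G l (fst p), \<lambda>i. snd p i + int (kg_deg G l i)))"

definition gen_act ::
  "('a, 'k) kgraph \<Rightarrow> 'a kpgen \<Rightarrow> ('a \<times> ('k \<Rightarrow> int) \<Rightarrow> 'r::comm_ring_1) \<Rightarrow> 'a \<times> ('k \<Rightarrow> int) \<Rightarrow> 'r" where
  "gen_act G g f p = (if gen_dom G g p then f (gen_map G g p) else 0)"

fun word_act ::
  "('a, 'k) kgraph \<Rightarrow> 'a kpgen list \<Rightarrow> ('a \<times> ('k \<Rightarrow> int) \<Rightarrow> 'r::comm_ring_1) \<Rightarrow> 'a \<times> ('k \<Rightarrow> int) \<Rightarrow> 'r" where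
  "word_act G [] f = f"
| "word_act G (g # w) f = gen_act G g (word_act G w f)"

definition fa_act ::
  "('a, 'k) kgraph \<Rightarrow> ('a kpgen list \<Rightarrow> 'r::comm_ring_1) \<Rightarrow>
   ('a \<times> ('k \<Rightarrow> int) \<Rightarrow> 'r) \<Rightarrow> 'a \<times> ('k \<Rightarrow> int) \<Rightarrow> 'r" where
  "fa_act G x f p = (\<Sum>w\<in>fa_supp x. x w * word_act G w f p)"

lemma word_act_append: "word_act G (u @ v) f = word_act G u (word_act G v f)"
  by (induction u) auto

lemma word_act_sum: "word_act G w (\<lambda>p. \<Sum>v\<in>V. h v p) = (\<lambda>p. \<Sum>v\<in>V. word_act G w (h v) p)"
proof (induction w)
  case (Cons g w)
  show ?case by (simp add: Cons gen_act_def fun_eq_iff)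
qed simp

lemma word_act_scal: "word_act G w (\<lambda>p. c * h p) = (\<lambda>p. c * word_act G w h p)"
proof (induction w)
  case (Cons g w)
  show ?case by (simp add: Cons gen_act_def fun_eq_iff)
qed simp

lemma fa_act_eq_sum:
  assumes "finite S" "fa_supp x \<subseteq> S"
  shows "fa_act G x f p = (\<Sum>w\<in>S. x w * word_act G w f p)"
  unfolding fa_act_def
  by (rule sum.mono_neutral_left) (use assms in \<open>auto simp: fa_supp_def\<close>)

lemma fa_act_mono: "fa_act G (fa_mono c w) f = (\<lambda>p. c * word_act G w f p)"
proof
  fix p
  have "fa_act G (fa_mono c w) f p = (\<Sum>u\<in>{w}. fa_mono c w u * word_act G u f p)"
    by (rule fa_act_eq_sum) (auto simp: fa_supp_def fa_mono_def)
  then show "fa_act G (fa_mono c w) f p = c * word_act G w f p"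
    by (simp add: fa_mono_def)
qed

lemma fa_act_zero: "fa_act G (\<lambda>_. 0) f = (\<lambda>_. 0)"
  by (simp add: fa_act_def fa_supp_def fun_eq_iff)

lemma fa_act_add:
  assumes "x \<in> fa_carrier G" "y \<in> fa_carrier G"
  shows "fa_act G (\<lambda>w. x w + y w) f = (\<lambda>p. fa_act G x f p + fa_act G y f p)"
proof
  fix p
  let ?S = "fa_supp x \<union> fa_supp y"
  have S: "finite ?S"
    using assms by (simp add: fa_carrier_iff)
  have "fa_supp (\<lambda>w. x w + y w) \<subseteq> ?S"
    by (auto simp: fa_supp_def)
  then show "fa_act G (\<lambda>w. x w + y w) f p = fa_act G x f p + fa_act G y f p"
    by (simp add: fa_act_eq_sum[OF S] distrib_right sum.distrib)
qed

lemma fa_act_diff: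
  assumes "x \<in> fa_carrier G" "y \<in> fa_carrier G"
  shows "fa_act G (\<lambda>w. x w - y w) f = (\<lambda>p. fa_act G x f p - fa_act G y f p)"
proof
  fix p
  let ?S = "fa_supp x \<union> fa_supp y"
  have S: "finite ?S"
    using assms by (simp add: fa_carrier_iff)
  have "fa_supp (\<lambda>w. x w - y w) \<subseteq> ?S"
    by (auto simp: fa_supp_def)
  then show "fa_act G (\<lambda>w. x w - y w) f p = fa_act G x f p - fa_act G y f p"
    by (simp add: fa_act_eq_sum[OF S] left_diff_distrib sum_subtractf)
qed

lemma fa_act_uminus: "fa_act G (\<lambda>w. - x w) f = (\<lambda>p. - fa_act G x f p)"
  by (simp add: fa_act_def fa_supp_def sum_negf fun_eq_iff)

lemma fa_act_sum:
  "finite L \<Longrightarrow> (\<And>l. l \<in> L \<Longrightarrow> x l \<in> fa_carrier G) \<Longrightarrow>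
   fa_act G (\<lambda>w. \<Sum>l\<in>L. x l w) f = (\<lambda>p. \<Sum>l\<in>L. fa_act G (x l) f p)"
  by (induction L rule: finite_induct) (simp_all add: fa_act_zero fa_act_add fa_sum_closed)

lemma fa_act_mult:
  assumes "x \<in> fa_carrier G" "y \<in> fa_carrier G"
  shows "fa_act G (fa_mult x y) f = fa_act G x (fa_act G y f)"
proof
  fix p
  let ?X = "fa_supp x" and ?Y = "fa_supp y"
  let ?S = "(\<lambda>q. fst q @ snd q) ` (?X \<times> ?Y)"
  let ?t = "\<lambda>P. x (fst (snd P)) * y (snd (snd P)) * word_act G (fst P) f p"
  have "finite ?X" "finite ?Y"
    using assms by (auto simp: fa_carrier_iff)
  then have "finite ?S" by simp
  have "fa_act G (fa_mult x y) f p = (\<Sum>w\<in>?S. fa_mult x y w * word_act G w f p)"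
    by (rule fa_act_eq_sum[OF \<open>finite ?S\<close> fa_supp_mult_subset])
  also have "\<dots> = (\<Sum>P\<in>Sigma ?S splits. ?t P)"
    by (simp add: fa_mult_splits sum_distrib_right sum.Sigma[OF \<open>finite ?S\<close>] split_def)
  also have "\<dots> = (\<Sum>P\<in>(\<lambda>q. (fst q @ snd q, q)) ` (?X \<times> ?Y). ?t P)"
  proof (rule sum.mono_neutral_right)
    show "\<forall>P\<in>Sigma ?S splits - (\<lambda>q. (fst q @ snd q, q)) ` (?X \<times> ?Y). ?t P = 0"
      by (force simp: splits_def fa_supp_def)
    show "finite (Sigma ?S splits)"
      using \<open>finite ?S\<close> by (intro finite_SigmaI) simp_all
  qed (auto simp: splits_def)
  also have "\<dots> = (\<Sum>u\<in>?X. \<Sum>v\<in>?Y. x u * y v * word_act G (u @ v) f p)"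
    by (simp add: sum.reindex inj_on_def sum.cartesian_product split_def)
  also have "\<dots> = fa_act G x (fa_act G y f) p"
    unfolding fa_act_def[abs_def] word_act_sum word_act_scal word_act_append
    by (simp add: sum_distrib_left mult.assoc)
  finally show "fa_act G (fa_mult x y) f p = fa_act G x (fa_act G y f) p" .
qed

definition eventually_zero :: "('a, 'k) kgraph \<Rightarrow> ('a \<times> ('k \<Rightarrow> int) \<Rightarrow> 'r::comm_ring_1) \<Rightarrow> bool" where
  "eventually_zero G f \<longleftrightarrow> (\<exists>N. \<forall>\<nu>\<in>kg_arr G. \<forall>z. (\<forall>i. N i \<le> kg_deg G \<nu> i) \<longrightarrow> f (\<nu>, z) = 0)"

lemma eventually_zero_zero [simp]: "eventually_zero G (\<lambda>_. 0)"
  by (auto simp: eventually_zero_def)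

lemma eventually_zero_add:
  assumes "eventually_zero G f" "eventually_zero G g"
  shows "eventually_zero G (\<lambda>p. f p + g p)"
proof -
  obtain N1 N2 where
    "\<forall>\<nu>\<in>kg_arr G. \<forall>z. (\<forall>i. N1 i \<le> kg_deg G \<nu> i) \<longrightarrow> f (\<nu>, z) = 0"
    "\<forall>\<nu>\<in>kg_arr G. \<forall>z. (\<forall>i. N2 i \<le> kg_deg G \<nu> i) \<longrightarrow> g (\<nu>, z) = 0"
    using assms by (auto simp: eventually_zero_def)
  then show ?thesis
    unfolding eventually_zero_def by (intro exI[of _ "\<lambda>i. max (N1 i) (N2 i)"]) auto
qed

lemma eventually_zero_scal: "eventually_zero G f \<Longrightarrow> eventually_zero G (\<lambda>p. c * f p)"
  unfolding eventually_zero_def by (metis mult_zero_right)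

lemma eventually_zero_uminus: "eventually_zero G f \<Longrightarrow> eventually_zero G (\<lambda>p. - f p)"
  using eventually_zero_scal[of G f "-1"] by simp

lemma eventually_zero_sum:
  "finite V \<Longrightarrow> (\<And>v. v \<in> V \<Longrightarrow> eventually_zero G (h v)) \<Longrightarrow> eventually_zero G (\<lambda>p. \<Sum>v\<in>V. h v p)"
  by (induction V rule: finite_induct) (auto intro: eventually_zero_add)

definition ez_kernel :: "('a, 'k) kgraph \<Rightarrow> ('a kpgen list \<Rightarrow> 'r::comm_ring_1) set" where
  "ez_kernel G = {x \<in> fa_carrier G. \<forall>f. eventually_zero G (fa_act G x f)}"

lemma word_act_vertex_vertex:
  "word_act G [Pg v, Pg w] f = (\<lambda>p. (if v = w then 1 else 0) * word_act G [Pg v] f p)"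
  by (auto simp: gen_act_def gen_dom_def gen_map_def fun_eq_iff)

lemma fa_mono_diff_in_ez_kernel:
  assumes "set u \<subseteq> Collect (valid_gen G)" "set v \<subseteq> Collect (valid_gen G)"
    and "\<And>f. eventually_zero G (\<lambda>p. word_act G u f p - d * word_act G v f p)"
  shows "(\<lambda>w. fa_mono 1 u w - fa_mono d v w) \<in> ez_kernel G"
proof -
  have c: "fa_mono 1 u \<in> fa_carrier G" "fa_mono d v \<in> fa_carrier G"
    using assms(1,2) by (simp_all add: fa_mono_closed)
  then have "fa_act G (\<lambda>w. fa_mono 1 u w - fa_mono d v w) f =
      (\<lambda>p. word_act G u f p - d * word_act G v f p)" for f
    by (simp add: fa_act_diff[OF c] fa_act_mono)
  with c show ?thesis
    using assms(3) fa_diff_closed[OF c] by (simp add: ez_kernel_def)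
qed

lemma free_alg_uminus:
  assumes "x \<in> fa_carrier G"
  shows "\<ominus>\<^bsub>free_alg G\<^esub> x = (\<lambda>w. - x w)"
proof -
  interpret ring "free_alg G" by (rule ring_free_alg)
  have "(\<lambda>w. - x w) \<in> carrier (free_alg G)"
    using fa_diff_closed[OF fa_zero_closed assms] by (simp add: free_alg_def)
  then show ?thesis
    using assms by (intro minus_equality) (simp_all add: free_alg_def)
qed

context kgraph
begin

lemma eventually_zero_gen_act:
  assumes "valid_gen G g" "eventually_zero G f"
  shows "eventually_zero G (gen_act G g f)"
proof -
  obtain N where N: "\<And>\<nu> z. \<nu> \<in> arr \<Longrightarrow> \<forall>i. N i \<le> degree \<nu> i \<Longrightarrow> f (\<nu>, z) = 0"
    using assms(2) by (auto simp: eventually_zero_def)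
  show ?thesis
  proof (cases g)
    case (Pg v)
    then show ?thesis
      using N unfolding eventually_zero_def
      by (intro exI[of _ N]) (auto simp: gen_act_def gen_dom_def gen_map_def)
  next
    case (Sg l)
    then have l: "l \<in> arr"
      using assms(1) by (simp add: valid_gen_def)
    have vanish: "gen_act G g f (\<nu>, z) = 0" if "\<forall>i. N i + degree l i \<le> degree \<nu> i" for \<nu> z
    proof (cases "kg_extends G l \<nu>")
      case True
      then obtain \<mu> where \<mu>: "\<mu> \<in> arr" "rng \<mu> = src l" "\<nu> = cmp l \<mu>"
        by (auto simp: kg_extends_def)
      with l that have "\<forall>i. N i \<le> degree \<mu> i"
        by (simp add: degree_comp)
      with \<mu> l show ?thesis
        by (simp add: Sg gen_act_def gen_dom_def gen_map_def N)
    qed (simp add: Sg gen_act_def gen_dom_def)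
    show ?thesis
      unfolding eventually_zero_def by (rule exI[of _ "\<lambda>i. N i + degree l i"]) (use vanish in blast)
  next
    case (Tg l)
    then have l: "l \<in> arr"
      using assms(1) by (simp add: valid_gen_def)
    have vanish: "gen_act G g f (\<nu>, z) = 0" if "\<nu> \<in> arr" "\<forall>i. N i \<le> degree \<nu> i" for \<nu> z
    proof (cases "rng \<nu> = src l")
      case True
      with l that have "cmp l \<nu> \<in> arr" "\<forall>i. N i \<le> degree (cmp l \<nu>) i"
        by (simp_all add: comp_arr degree_comp trans_le_add2)
      with True show ?thesis
        using that by (simp add: Tg gen_act_def gen_dom_def gen_map_def N)
    qed (simp add: Tg gen_act_def gen_dom_def)
    show ?thesis
      unfolding eventually_zero_def by (rule exI[of _ N]) (use vanish in blast)
  qed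
qed

lemma eventually_zero_word_act:
  "set w \<subseteq> Collect (valid_gen G) \<Longrightarrow> eventually_zero G f \<Longrightarrow> eventually_zero G (word_act G w f)"
  by (induction w) (auto intro: eventually_zero_gen_act)

lemma eventually_zero_fa_act:
  assumes "x \<in> fa_carrier G" "eventually_zero G f"
  shows "eventually_zero G (fa_act G x f)"
  using assms unfolding fa_act_def[abs_def] fa_carrier_iff
  by (intro eventually_zero_sum eventually_zero_scal eventually_zero_word_act) auto

lemma ideal_ez_kernel: "ideal (ez_kernel G :: ('a kpgen list \<Rightarrow> 'r::comm_ring_1) set) (free_alg G)"
proof -
  interpret R: ring "free_alg G" by (rule ring_free_alg)
  let ?K = "ez_kernel G :: ('a kpgen list \<Rightarrow> 'r) set"
  have "subgroup ?K (add_monoid (free_alg G))"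
  proof (rule R.add.subgroupI)
    show "?K \<subseteq> carrier (free_alg G)"
      by (auto simp: ez_kernel_def free_alg_def)
    have "(\<lambda>_. 0) \<in> ?K"
      by (simp add: ez_kernel_def fa_zero_closed fa_act_zero)
    then show "?K \<noteq> {}"
      by blast
  next
    fix x assume "x \<in> ?K"
    then show "\<ominus>\<^bsub>free_alg G\<^esub> x \<in> ?K"
      using fa_diff_closed[OF fa_zero_closed]
      by (auto simp: free_alg_uminus ez_kernel_def fa_act_uminus intro: eventually_zero_uminus)
  next
    fix x y assume "x \<in> ?K" "y \<in> ?K"
    then show "x \<oplus>\<^bsub>free_alg G\<^esub> y \<in> ?K"
      by (auto simp: ez_kernel_def free_alg_def fa_act_add fa_add_closed intro: eventually_zero_add)
  qed
  then show ?thesis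
    by (rule idealI[OF ring_free_alg])
       (auto simp: ez_kernel_def free_alg_def fa_act_mult fa_mult_closed eventually_zero_fa_act)
qed

lemma sw_valid: "l \<in> arr \<Longrightarrow> set (sw G l) \<subseteq> Collect (valid_gen G)"
  and swstar_valid: "l \<in> arr \<Longrightarrow> set (swstar G l) \<subseteq> Collect (valid_gen G)"
  by (auto simp: sw_def swstar_def valid_gen_def vertexI)

lemma word_act_sw:
  assumes "l \<in> arr"
  shows "word_act G (sw G l) f (\<nu>, z) =
    (if kg_extends G l \<nu> then f (kg_residual G l \<nu>, \<lambda>i. z i - int (degree l i)) else 0)"
proof (cases "degree l = (\<lambda>_. 0)")
  case True
  with assms have "l \<in> kg_vertices G"
    by (rule vertexI)
  then show ?thesis
    using True
    by (auto simp: sw_def gen_act_def gen_dom_def gen_map_def kg_extends_vertex kg_residual_vertex)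
qed (simp add: sw_def gen_act_def gen_dom_def gen_map_def)

lemma word_act_swstar:
  assumes "l \<in> arr"
  shows "word_act G (swstar G l) f (\<nu>, z) =
    (if \<nu> \<in> arr \<and> rng \<nu> = src l then f (cmp l \<nu>, \<lambda>i. z i + int (degree l i)) else 0)"
proof (cases "degree l = (\<lambda>_. 0)")
  case True
  with assms have "l \<in> kg_vertices G"
    by (rule vertexI)
  then show ?thesis
    using True by (auto simp: swstar_def gen_act_def gen_dom_def gen_map_def vertex_src)
qed (simp add: swstar_def gen_act_def gen_dom_def gen_map_def)

lemma word_act_sw_comp:
  assumes "l \<in> arr" "m \<in> arr" "src l = rng m"
  shows "word_act G (sw G l @ sw G m) f = word_act G (sw G (cmp l m)) f"
proof
  fix p :: "'a \<times> ('k \<Rightarrow> int)"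
  obtain \<nu> z where p: "p = (\<nu>, z)" by (cases p)
  have "cmp l m \<in> arr" "degree (cmp l m) = (\<lambda>i. degree l i + degree m i)"
    using assms by (simp_all add: comp_arr degree_comp)
  then show "word_act G (sw G l @ sw G m) f p = word_act G (sw G (cmp l m)) f p"
    using assms kg_residual_comp_split[OF assms]
    by (auto simp: p word_act_append word_act_sw kg_extends_comp algebra_simps)
qed

lemma word_act_swstar_comp:
  assumes "l \<in> arr" "m \<in> arr" "src l = rng m"
  shows "word_act G (swstar G m @ swstar G l) f = word_act G (swstar G (cmp l m)) f"
proof
  fix p :: "'a \<times> ('k \<Rightarrow> int)"
  obtain \<nu> z where p: "p = (\<nu>, z)" by (cases p)
  have "cmp l m \<in> arr" "degree (cmp l m) = (\<lambda>i. degree l i + degree m i)"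
    using assms by (simp_all add: comp_arr degree_comp)
  then show "word_act G (swstar G m @ swstar G l) f p = word_act G (swstar G (cmp l m)) f p"
    using assms by (auto simp: p word_act_append word_act_swstar comp_arr comp_assoc algebra_simps)
qed

lemma word_act_swstar_sw:
  assumes "l \<in> arr" "m \<in> arr" "degree l = degree m"
  shows "word_act G (swstar G l @ sw G m) f =
    (\<lambda>p. (if l = m then 1 else 0) * word_act G [Pg (src l)] f p)"
proof
  fix p :: "'a \<times> ('k \<Rightarrow> int)"
  obtain \<mu> z where p: "p = (\<mu>, z)" by (cases p)
  have "kg_extends G m (cmp l \<mu>) \<longleftrightarrow> l = m" if "\<mu> \<in> arr" "rng \<mu> = src l"
  proof
    assume "kg_extends G m (cmp l \<mu>)"
    then obtain \<rho> where "\<rho> \<in> arr" "rng \<rho> = src m" "cmp l \<mu> = cmp m \<rho>"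
      by (auto simp: kg_extends_def)
    then show "l = m"
      using factorization_unique[of l \<mu> m \<rho>] assms that by simp
  qed (use that in \<open>simp add: kg_extendsI\<close>)
  then show "word_act G (swstar G l @ sw G m) f p =
      (if l = m then 1 else 0) * word_act G [Pg (src l)] f p"
    using assms
    by (auto simp: p word_act_append word_act_swstar word_act_sw gen_act_def gen_dom_def gen_map_def)
qed

text \<open>Only (KP4) needs the passage to eventually zero functions: a path of degree at least n has
  exactly one initial segment of degree n.\<close>

lemma eventually_zero_vertex_expansion:
  assumes "v \<in> kg_vertices G" "finite L" "L = {l \<in> arr. rng l = v \<and> degree l = n}"
  shows "eventually_zero G (\<lambda>p. word_act G [Pg v] f p - (\<Sum>l\<in>L. word_act G (sw G l @ swstar G l) f p))"
  unfolding eventually_zero_def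
proof (intro exI[of _ n] ballI allI impI)
  fix \<nu> z assume \<nu>: "\<nu> \<in> arr" and le: "\<forall>i. n i \<le> degree \<nu> i"
  then obtain l0 \<rho> where f: "l0 \<in> arr" "\<rho> \<in> arr" "src l0 = rng \<rho>" "degree l0 = n" "\<nu> = cmp l0 \<rho>"
    by (metis factorization_exists)
  have "word_act G (sw G l @ swstar G l) f (\<nu>, z) = (if l = l0 then f (\<nu>, z) else 0)" if "l \<in> L" for l
  proof -
    have l: "l \<in> arr" "degree l = n"
      using that assms(3) by auto
    have "kg_extends G l \<nu> \<longleftrightarrow> l = l0"
    proof
      assume "kg_extends G l \<nu>"
      then obtain \<mu> where "\<mu> \<in> arr" "rng \<mu> = src l" "cmp l \<mu> = cmp l0 \<rho>"
        using f(5) by (auto simp: kg_extends_def)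
      then show "l = l0"
        using factorization_unique[of l \<mu> l0 \<rho>] l f by simp
    qed (use f in \<open>simp add: kg_extendsI\<close>)
    then show ?thesis
      using l by (auto simp: word_act_append word_act_sw word_act_swstar elim: kg_extendsE)
  qed
  then have "(\<Sum>l\<in>L. word_act G (sw G l @ swstar G l) f (\<nu>, z)) = (if l0 \<in> L then f (\<nu>, z) else 0)"
    using assms(2) by (simp add: sum.delta' cong: sum.cong)
  moreover have "l0 \<in> L \<longleftrightarrow> rng \<nu> = v"
    using f assms(3) by auto
  ultimately show "word_act G [Pg v] f (\<nu>, z) - (\<Sum>l\<in>L. word_act G (sw G l @ swstar G l) f (\<nu>, z)) = 0"
    using \<nu> by (simp add: gen_act_def gen_dom_def gen_map_def)
qed


lemma vertex_expansion_in_ez_kernel: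
  assumes "row_finite G" "v \<in> kg_vertices G"
  shows "((\<lambda>u. fa_mono 1 [Pg v] u - (\<Sum>l\<in>{l \<in> arr. rng l = v \<and> degree l = n}.
                  fa_mono 1 (sw G l @ swstar G l) u)) :: 'a kpgen list \<Rightarrow> 'r::comm_ring_1) \<in> ez_kernel G"
proof -
  let ?L = "{l \<in> arr. rng l = v \<and> degree l = n}"
  have fin: "finite ?L"
    using assms unfolding row_finite_def by blast
  have c: "(fa_mono 1 [Pg v] :: 'a kpgen list \<Rightarrow> 'r) \<in> fa_carrier G"
    "\<And>l. l \<in> ?L \<Longrightarrow> (fa_mono 1 (sw G l @ swstar G l) :: 'a kpgen list \<Rightarrow> 'r) \<in> fa_carrier G"
    using assms(2) sw_valid swstar_valid by (simp_all add: fa_mono_closed valid_gen_def)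
  have s: "(\<lambda>u. \<Sum>l\<in>?L. fa_mono 1 (sw G l @ swstar G l) u :: 'r) \<in> fa_carrier G"
    using fin c(2) by (rule fa_sum_closed)
  have "fa_act G (\<lambda>u. \<Sum>l\<in>?L. fa_mono 1 (sw G l @ swstar G l) u :: 'r) f =
      (\<lambda>p. \<Sum>l\<in>?L. word_act G (sw G l @ swstar G l) f p)" for f
    using fa_act_sum[OF fin c(2)] by (simp add: fa_act_mono)
  then show ?thesis
    using fa_diff_closed[OF c(1) s] fin assms(2)
    by (simp add: ez_kernel_def fa_act_diff[OF c(1) s] fa_act_mono eventually_zero_vertex_expansion
             del: word_act.simps)
qed

lemma kp_rels_subset_ez_kernel:
  assumes "row_finite G"
  shows "(kp_rels G :: ('a kpgen list \<Rightarrow> 'r::comm_ring_1) set) \<subseteq> ez_kernel G"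
proof
  fix x :: "'a kpgen list \<Rightarrow> 'r" assume "x \<in> kp_rels G"
  then consider
    (vertex) v w where "x = (\<lambda>u. fa_mono 1 [Pg v, Pg w] u - (if v = w then fa_mono 1 [Pg v] u else 0))"
      "v \<in> kg_vertices G" "w \<in> kg_vertices G"
  | (path) l m where "x = (\<lambda>u. fa_mono 1 (sw G l @ sw G m) u - fa_mono 1 (sw G (cmp l m)) u)"
      "l \<in> arr" "m \<in> arr" "src l = rng m"
  | (ghost) l m where
      "x = (\<lambda>u. fa_mono 1 (swstar G m @ swstar G l) u - fa_mono 1 (swstar G (cmp l m)) u)"
      "l \<in> arr" "m \<in> arr" "src l = rng m"
  | (CK1) l m where
      "x = (\<lambda>u. fa_mono 1 (swstar G l @ sw G m) u - (if l = m then fa_mono 1 [Pg (src l)] u else 0))"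
      "l \<in> arr" "m \<in> arr" "degree l = degree m"
  | (CK2) v n where
      "x = (\<lambda>u. fa_mono 1 [Pg v] u -
              (\<Sum>l\<in>{l \<in> arr. rng l = v \<and> degree l = n}. fa_mono 1 (sw G l @ swstar G l) u))"
      "v \<in> kg_vertices G"
    unfolding kp_rels_def by blast
  then show "x \<in> ez_kernel G"
  proof cases
    case vertex
    then have x: "x = (\<lambda>u. fa_mono 1 [Pg v, Pg w] u - fa_mono (if v = w then 1 else 0) [Pg v] u)"
      by (auto simp: fa_mono_def)
    show ?thesis
      unfolding x
      by (rule fa_mono_diff_in_ez_kernel)
         (use vertex in \<open>simp_all add: word_act_vertex_vertex valid_gen_def del: word_act.simps\<close>)
  next
    case path
    then show ?thesis
      using fa_mono_diff_in_ez_kernel[where d = 1, of "sw G l @ sw G m" G "sw G (cmp l m)"]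
      by (simp add: sw_valid comp_arr word_act_sw_comp)
  next
    case ghost
    then show ?thesis
      using fa_mono_diff_in_ez_kernel[where d = 1, of "swstar G m @ swstar G l" G "swstar G (cmp l m)"]
      by (simp add: swstar_valid comp_arr word_act_swstar_comp)
  next
    case CK1
    then have x: "x = (\<lambda>u. fa_mono 1 (swstar G l @ sw G m) u -
        fa_mono (if l = m then 1 else 0) [Pg (src l)] u)"
      by (auto simp: fa_mono_def)
    show ?thesis
      unfolding x
      by (rule fa_mono_diff_in_ez_kernel)
         (use CK1 in \<open>simp_all add: word_act_swstar_sw sw_valid swstar_valid valid_gen_def
                                   src_in_vertices\<close>)
  next
    case CK2
    then show ?thesis
      using assms by (simp add: vertex_expansion_in_ez_kernel)
  qed
qed

lemma kp_ideal_subset_ez_kernel: "row_finite G \<Longrightarrow> kp_ideal G \<subseteq> ez_kernel G"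
  unfolding kp_ideal_def
  by (rule ring.genideal_minimal[OF ring_free_alg ideal_ez_kernel kp_rels_subset_ez_kernel])

lemma ideal_kp_ideal: "row_finite G \<Longrightarrow> ideal (kp_ideal G) (free_alg G)"
  unfolding kp_ideal_def
  using kp_rels_subset_ez_kernel ideal.axioms(1)[OF ideal_ez_kernel]
  by (intro ring.genideal_ideal[OF ring_free_alg]) (auto simp: ez_kernel_def free_alg_def)

lemma ring_hom_ring_kp_class: "row_finite G \<Longrightarrow> ring_hom_ring (free_alg G) (KP G) (kp_class G)"
proof -
  assume "row_finite G"
  then interpret I: ideal "kp_ideal G" "free_alg G"
    by (rule ideal_kp_ideal)
  have kp_class_eq: "kp_class G = (+>\<^bsub>free_alg G\<^esub>) (kp_ideal G)"
    by (simp add: kp_class_def fun_eq_iff)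
  show ?thesis
    unfolding KP_def kp_class_eq by (rule I.rcos_ring_hom_ring)
qed

lemma central_commutator_eventually_zero:
  assumes "row_finite G" "a \<in> fa_carrier G" "kp_class G a \<in> kp_center G"
    and "set u \<subseteq> Collect (valid_gen G)"
  shows "eventually_zero G (\<lambda>p. fa_act G a (word_act G u f) p - word_act G u (fa_act G a f) p)"
proof -
  interpret R: ring "free_alg G" by (rule ring_free_alg)
  interpret I: ideal "kp_ideal G" "free_alg G" by (rule ideal_kp_ideal[OF assms(1)])
  interpret h: ring_hom_ring "free_alg G" "KP G" "kp_class G"
    by (rule ring_hom_ring_kp_class[OF assms(1)])
  let ?y = "fa_mono 1 u"
  let ?d = "a \<otimes>\<^bsub>free_alg G\<^esub> ?y \<ominus>\<^bsub>free_alg G\<^esub> ?y \<otimes>\<^bsub>free_alg G\<^esub> a"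
  have y: "?y \<in> carrier (free_alg G)" and a: "a \<in> carrier (free_alg G)"
    using assms(2,4) by (simp_all add: free_alg_def fa_mono_closed)
  have "kp_class G (a \<otimes>\<^bsub>free_alg G\<^esub> ?y) = kp_class G (?y \<otimes>\<^bsub>free_alg G\<^esub> a)"
    using assms(3) h.hom_closed[OF y] by (simp add: kp_center_def a y)
  then have "a \<otimes>\<^bsub>free_alg G\<^esub> ?y \<in> kp_ideal G +>\<^bsub>free_alg G\<^esub> (?y \<otimes>\<^bsub>free_alg G\<^esub> a)"
    using a y R.m_closed[OF a y] by (intro I.a_repr_independenceD) (simp_all add: kp_class_def)
  then have "?d \<in> kp_ideal G"
    using I.a_rcos_module_minus[OF ring_free_alg R.m_closed[OF y a] R.m_closed[OF a y]] by simp
  then have "eventually_zero G (fa_act G ?d f)"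
    using kp_ideal_subset_ez_kernel[OF assms(1)] by (auto simp: ez_kernel_def)
  moreover have "fa_act G ?d f = (\<lambda>p. fa_act G a (word_act G u f) p - word_act G u (fa_act G a f) p)"
  proof -
    have ops: "x \<otimes>\<^bsub>free_alg G\<^esub> z = fa_mult x z" "x \<oplus>\<^bsub>free_alg G\<^esub> z = (\<lambda>w. x w + z w)" for x z
      by (simp_all add: free_alg_def)
    have c: "fa_mult a ?y \<in> fa_carrier G" "fa_mult ?y a \<in> fa_carrier G" "?y \<in> fa_carrier G"
      using a y by (auto simp: free_alg_def intro: fa_mult_closed)
    then have "?d = (\<lambda>w. fa_mult a ?y w - fa_mult ?y a w)"
      by (simp add: a_minus_def ops free_alg_uminus)
    then show ?thesis
      by (simp add: fa_act_diff[OF c(1,2)] fa_act_mult[OF assms(2) c(3)] fa_act_mult[OF c(3) assms(2)]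
                    fa_act_mono)
  qed
  ultimately show ?thesis
    by simp
qed

end

section \<open>Central elements in normal form\<close>

definition normal_form_act ::
  "('a, 'k) kgraph \<Rightarrow> ('a \<times> 'a) set \<Rightarrow> ('a \<times> 'a \<Rightarrow> 'r::comm_ring_1) \<Rightarrow>
   ('a \<times> ('k \<Rightarrow> int) \<Rightarrow> 'r) \<Rightarrow> 'a \<times> ('k \<Rightarrow> int) \<Rightarrow> 'r" where
  "normal_form_act G F c f p =
     (\<Sum>q\<in>F. c q * word_act G (sw G (fst q)) (word_act G (swstar G (snd q)) f) p)"

locale central_normal_form = kgraph G for G :: "('a, 'k::finite) kgraph" +
  fixes F :: "('a \<times> 'a) set" and c :: "'a \<times> 'a \<Rightarrow> 'r::comm_ring_1" and m :: "'k \<Rightarrow> nat"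
  assumes finite_F: "finite F"
    and F_subset: "F \<subseteq> arr \<times> {\<beta> \<in> arr. degree \<beta> = m}"
    and coeff_nonzero: "\<And>q. q \<in> F \<Longrightarrow> c q \<noteq> 0"
    and src_eq: "\<And>\<alpha> \<beta>. (\<alpha>, \<beta>) \<in> F \<Longrightarrow> src \<alpha> = src \<beta>"
    and no_sources: "no_sources G"
    and commutes: "\<And>u f. set u \<subseteq> Collect (valid_gen G) \<Longrightarrow>
      eventually_zero G (\<lambda>p. normal_form_act G F c (word_act G u f) p -
                               word_act G u (normal_form_act G F c f) p)"
begin

abbreviation "A \<equiv> normal_form_act G F c"

definition cylinder :: "'a \<Rightarrow> 'a \<times> ('k \<Rightarrow> int) \<Rightarrow> 'r" where
  "cylinder \<tau> p = (if kg_extends G \<tau> (fst p) \<and> snd p = (\<lambda>i. int (degree \<tau> i)) then 1 else 0)"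

lemma F_arr: "(\<alpha>, \<beta>) \<in> F \<Longrightarrow> \<alpha> \<in> arr \<and> \<beta> \<in> arr \<and> degree \<beta> = m"
  using F_subset by auto

lemma commutes_on_long_paths:
  assumes "set u \<subseteq> Collect (valid_gen G)"
  obtains N where "\<And>\<nu> z. \<nu> \<in> arr \<Longrightarrow> \<forall>i. N i \<le> degree \<nu> i \<Longrightarrow>
    A (word_act G u f) (\<nu>, z) = word_act G u (A f) (\<nu>, z)"
  using commutes[OF assms, of f] unfolding eventually_zero_def by auto

lemma long_path_exists:
  assumes "v \<in> kg_vertices G"
  obtains \<mu> where "\<mu> \<in> arr" "rng \<mu> = v" "degree \<mu> = N"
  using no_sources assms unfolding no_sources_def by blast

lemma word_act_sw_swstar:
  assumes "\<alpha> \<in> arr" "\<beta> \<in> arr"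
  shows "word_act G (sw G \<alpha>) (word_act G (swstar G \<beta>) f) (\<nu>, z) =
    (if kg_extends G \<alpha> \<nu> \<and> rng (kg_residual G \<alpha> \<nu>) = src \<beta>
     then f (cmp \<beta> (kg_residual G \<alpha> \<nu>), \<lambda>i. z i - int (degree \<alpha> i) + int (degree \<beta> i)) else 0)"
  using assms by (auto simp: word_act_sw word_act_swstar elim: kg_extendsE)

lemma normal_form_act_nonzero:
  assumes "A h (\<nu>, z) \<noteq> 0"
  obtains \<alpha> \<beta> where "(\<alpha>, \<beta>) \<in> F" "kg_extends G \<alpha> \<nu>"
proof -
  obtain q where "q \<in> F" "c q * word_act G (sw G (fst q)) (word_act G (swstar G (snd q)) h) (\<nu>, z) \<noteq> 0"
    using assms unfolding normal_form_act_def by (meson sum.neutral)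
  then show ?thesis
    using that F_arr[of "fst q" "snd q"] by (cases q) (auto simp: word_act_sw_swstar split: if_splits)
qed

text \<open>The \<int>^k-coordinate forces d(\<alpha>) = d(\<sigma>) in a nonzero summand, so unique factorisation
  singles out the term (\<sigma>, \<tau>).\<close>

lemma summand_at_cylinder:
  assumes st: "(\<sigma>, \<tau>) \<in> F" and \<mu>: "\<mu> \<in> arr" "rng \<mu> = src \<sigma>" and ab: "(\<alpha>, \<beta>) \<in> F"
  shows "word_act G (sw G \<alpha>) (word_act G (swstar G \<beta>) (cylinder \<tau>)) (cmp \<sigma> \<mu>, \<lambda>i. int (degree \<sigma> i)) =
    (if (\<alpha>, \<beta>) = (\<sigma>, \<tau>) then 1 else 0)"
proof -
  have \<sigma>: "\<sigma> \<in> arr" and \<tau>: "\<tau> \<in> arr" "degree \<tau> = m" and "src \<sigma> = src \<tau>"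
    using F_arr[OF st] src_eq[OF st] by auto
  have \<alpha>: "\<alpha> \<in> arr" and \<beta>: "\<beta> \<in> arr" "degree \<beta> = m"
    using F_arr[OF ab] by auto
  let ?\<nu> = "cmp \<sigma> \<mu>" and ?z = "\<lambda>i. int (degree \<sigma> i)"
  let ?\<mu>' = "kg_residual G \<alpha> ?\<nu>"
  have "(\<alpha>, \<beta>) = (\<sigma>, \<tau>)"
    if "word_act G (sw G \<alpha>) (word_act G (swstar G \<beta>) (cylinder \<tau>)) (?\<nu>, ?z) \<noteq> 0"
  proof -
    from that have ext: "kg_extends G \<alpha> ?\<nu>" "rng ?\<mu>' = src \<beta>" "kg_extends G \<tau> (cmp \<beta> ?\<mu>')"
      and deg_eq: "(\<lambda>i. int (degree \<sigma> i) - int (degree \<alpha> i) + int (degree \<beta> i)) =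
                   (\<lambda>i. int (degree \<tau> i))"
      using \<alpha> \<beta> by (auto simp: word_act_sw_swstar cylinder_def split: if_splits)
    then have \<mu>': "?\<mu>' \<in> arr" "rng ?\<mu>' = src \<alpha>" "?\<nu> = cmp \<alpha> ?\<mu>'"
      using \<alpha> by (auto elim: kg_extendsE)
    have "degree \<sigma> = degree \<alpha>"
      using deg_eq \<beta>(2) \<tau>(2) by (auto simp: fun_eq_iff dest: fun_cong)
    then have "\<sigma> = \<alpha>"
      using factorization_unique[OF \<sigma> \<mu>(1) \<alpha> \<mu>'(1)] \<mu> \<mu>' by simp
    obtain \<rho> where "\<rho> \<in> arr" "rng \<rho> = src \<tau>" "cmp \<beta> ?\<mu>' = cmp \<tau> \<rho>"
      using ext(3) by (auto simp: kg_extends_def)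
    then have "\<beta> = \<tau>"
      using factorization_unique[OF \<beta>(1) \<mu>'(1) \<tau>(1)] ext(2) \<beta>(2) \<tau>(2) by simp
    with \<open>\<sigma> = \<alpha>\<close> show ?thesis
      by simp
  qed
  moreover have "word_act G (sw G \<sigma>) (word_act G (swstar G \<tau>) (cylinder \<tau>)) (?\<nu>, ?z) = 1"
    using \<mu> \<sigma> \<tau> \<open>src \<sigma> = src \<tau>\<close> by (simp add: word_act_sw_swstar cylinder_def kg_extendsI)
  ultimately show ?thesis
    by auto
qed

lemma normal_form_act_cylinder:
  assumes "(\<sigma>, \<tau>) \<in> F" "\<mu> \<in> arr" "rng \<mu> = src \<sigma>"
  shows "A (cylinder \<tau>) (cmp \<sigma> \<mu>, \<lambda>i. int (degree \<sigma> i)) = c (\<sigma>, \<tau>)"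
proof -
  have "A (cylinder \<tau>) (cmp \<sigma> \<mu>, \<lambda>i. int (degree \<sigma> i)) = (\<Sum>q\<in>F. c q * (if q = (\<sigma>, \<tau>) then 1 else 0))"
    unfolding normal_form_act_def using assms by (intro sum.cong) (auto simp: summand_at_cylinder)
  also have "\<dots> = c (\<sigma>, \<tau>)"
    using finite_F assms(1) by (simp add: if_distrib sum.delta' cong: if_cong)
  finally show ?thesis .
qed

lemma rng_fst_eq_rng_snd:
  assumes st: "(\<sigma>, \<tau>) \<in> F"
  shows "rng \<sigma> = rng \<tau>"
proof (rule ccontr)
  assume ne: "rng \<sigma> \<noteq> rng \<tau>"
  have \<sigma>: "\<sigma> \<in> arr" and \<tau>: "\<tau> \<in> arr"
    using F_arr[OF st] by auto
  let ?u = "[Pg (rng \<tau>)]"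
  have "set ?u \<subseteq> Collect (valid_gen G)"
    using rng_in_vertices[OF \<tau>] by (simp add: valid_gen_def)
  then obtain N where N: "\<And>\<nu> z. \<nu> \<in> arr \<Longrightarrow> \<forall>i. N i \<le> degree \<nu> i \<Longrightarrow>
      A (word_act G ?u (cylinder \<tau>)) (\<nu>, z) = word_act G ?u (A (cylinder \<tau>)) (\<nu>, z)"
    using commutes_on_long_paths[where f = "cylinder \<tau>"] by blast
  obtain \<mu> where \<mu>: "\<mu> \<in> arr" "rng \<mu> = src \<sigma>" "degree \<mu> = N"
    using long_path_exists[OF src_in_vertices[OF \<sigma>]] .
  have "word_act G ?u (cylinder \<tau>) = cylinder \<tau>"
    using \<tau> by (auto simp: gen_act_def gen_dom_def gen_map_def cylinder_def fun_eq_iff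
                     dest: kg_extends_arr_rng)
  then have "c (\<sigma>, \<tau>) = word_act G ?u (A (cylinder \<tau>)) (cmp \<sigma> \<mu>, \<lambda>i. int (degree \<sigma> i))"
    using N[of "cmp \<sigma> \<mu>"] normal_form_act_cylinder[OF st \<mu>(1,2)] \<mu> \<sigma> by (simp add: comp_arr degree_comp)
  also have "\<dots> = 0"
    using \<mu> \<sigma> ne by (simp add: gen_act_def gen_dom_def)
  finally show False
    using coeff_nonzero[OF st] by simp
qed

lemma normal_form_act_support:
  assumes "A h (\<nu>, z) \<noteq> 0"
  shows "rng \<nu> \<in> rng ` snd ` F"
proof -
  obtain \<alpha> \<beta> where "(\<alpha>, \<beta>) \<in> F" "kg_extends G \<alpha> \<nu>"
    using assms by (rule normal_form_act_nonzero)
  then have "rng \<nu> = rng \<beta>" "(\<alpha>, \<beta>) \<in> F"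
    using F_arr kg_extends_arr_rng rng_fst_eq_rng_snd by auto
  then show ?thesis
    by force
qed

lemma rng_in_range_vertices:
  assumes \<mu>: "\<mu> \<in> arr" "src \<mu> \<in> rng ` snd ` F"
  shows "rng \<mu> \<in> rng ` snd ` F"
proof (rule ccontr)
  assume not_W: "rng \<mu> \<notin> rng ` snd ` F"
  obtain \<alpha> \<beta> where st: "(\<alpha>, \<beta>) \<in> F" "src \<mu> = rng \<beta>"
    using \<mu>(2) by auto
  have \<alpha>: "\<alpha> \<in> arr" and "rng \<alpha> = src \<mu>"
    using F_arr[OF st(1)] rng_fst_eq_rng_snd[OF st(1)] st(2) by auto
  obtain N where N: "\<And>\<nu> z. \<nu> \<in> arr \<Longrightarrow> \<forall>i. N i \<le> degree \<nu> i \<Longrightarrow>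
      A (word_act G (sw G \<mu>) (cylinder \<beta>)) (\<nu>, z) = word_act G (sw G \<mu>) (A (cylinder \<beta>)) (\<nu>, z)"
    using commutes_on_long_paths[OF sw_valid[OF \<mu>(1)], where f = "cylinder \<beta>"] by blast
  obtain \<rho> where \<rho>: "\<rho> \<in> arr" "rng \<rho> = src \<alpha>" "degree \<rho> = N"
    using long_path_exists[OF src_in_vertices[OF \<alpha>]] .
  let ?\<xi> = "cmp \<alpha> \<rho>"
  have \<xi>: "?\<xi> \<in> arr" "rng ?\<xi> = src \<mu>" "\<forall>i. N i \<le> degree ?\<xi> i"
    using \<rho> \<alpha> \<open>rng \<alpha> = src \<mu>\<close> by (simp_all add: comp_arr degree_comp)
  let ?\<nu> = "cmp \<mu> ?\<xi>" and ?z = "\<lambda>i. int (degree \<alpha> i) + int (degree \<mu> i)"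
  have \<nu>: "?\<nu> \<in> arr" "rng ?\<nu> = rng \<mu>" "\<forall>i. N i \<le> degree ?\<nu> i"
    using \<xi> \<mu>(1) by (auto simp: comp_arr degree_comp intro: trans_le_add2)
  have "c (\<alpha>, \<beta>) = A (cylinder \<beta>) (?\<xi>, \<lambda>i. int (degree \<alpha> i))"
    by (rule normal_form_act_cylinder[OF st(1) \<rho>(1,2), symmetric])
  also have "\<dots> = word_act G (sw G \<mu>) (A (cylinder \<beta>)) (?\<nu>, ?z)"
    using \<mu>(1) \<xi> by (simp add: word_act_sw kg_extendsI)
  also have "\<dots> = A (word_act G (sw G \<mu>) (cylinder \<beta>)) (?\<nu>, ?z)"
    using N \<nu> by simp
  also have "\<dots> = 0"
    using normal_form_act_support not_W \<nu>(2) by metis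
  finally show False
    using coeff_nonzero[OF st(1)] by simp
qed

lemma src_in_range_vertices:
  assumes st: "(\<sigma>, \<tau>) \<in> F"
  shows "src \<sigma> \<in> rng ` snd ` F"
proof (rule ccontr)
  assume not_W: "src \<sigma> \<notin> rng ` snd ` F"
  have \<sigma>: "\<sigma> \<in> arr"
    using F_arr[OF st] by auto
  obtain N where N: "\<And>\<nu> z. \<nu> \<in> arr \<Longrightarrow> \<forall>i. N i \<le> degree \<nu> i \<Longrightarrow>
      A (word_act G (swstar G \<sigma>) (cylinder \<tau>)) (\<nu>, z) = word_act G (swstar G \<sigma>) (A (cylinder \<tau>)) (\<nu>, z)"
    using commutes_on_long_paths[OF swstar_valid[OF \<sigma>], where f = "cylinder \<tau>"] by blast
  obtain \<rho> where \<rho>: "\<rho> \<in> arr" "rng \<rho> = src \<sigma>" "degree \<rho> = N"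
    using long_path_exists[OF src_in_vertices[OF \<sigma>]] .
  have "c (\<sigma>, \<tau>) = A (cylinder \<tau>) (cmp \<sigma> \<rho>, \<lambda>i. int (degree \<sigma> i))"
    by (rule normal_form_act_cylinder[OF st \<rho>(1,2), symmetric])
  also have "\<dots> = word_act G (swstar G \<sigma>) (A (cylinder \<tau>)) (\<rho>, \<lambda>_. 0)"
    using \<sigma> \<rho> by (simp add: word_act_swstar)
  also have "\<dots> = A (word_act G (swstar G \<sigma>) (cylinder \<tau>)) (\<rho>, \<lambda>_. 0)"
    using N \<rho> by simp
  also have "\<dots> = 0"
    using normal_form_act_support not_W \<rho>(2) by metis
  finally show False
    using coeff_nonzero[OF st] by simp
qed

end

lemma finite_successor_cycle:
  assumes "finite F" "q0 \<in> F" "\<And>q. q \<in> F \<Longrightarrow> \<exists>q'\<in>F. R q q'"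
  obtains ps where "ps \<noteq> []" "set ps \<subseteq> F" "\<forall>i. Suc i < length ps \<longrightarrow> R (ps ! i) (ps ! Suc i)"
    and "R (last ps) (hd ps)"
proof -
  obtain next_q where next_q: "\<And>q. q \<in> F \<Longrightarrow> next_q q \<in> F \<and> R q (next_q q)"
    using assms(3) by metis
  define orbit where "orbit n = (next_q ^^ n) q0" for n
  have orbit_F: "orbit n \<in> F" for n
    by (induction n) (simp_all add: orbit_def assms(2) next_q)
  have orbit_R: "R (orbit n) (orbit (Suc n))" for n
    using next_q[OF orbit_F] by (simp add: orbit_def)
  have "finite (range orbit)"
    using assms(1) orbit_F by (meson finite_subset image_subsetI)
  then have "\<not> inj orbit"
    using finite_imageD by blast
  then obtain i j where ij: "i < j" "orbit i = orbit j"
    unfolding inj_def by (metis linorder_neqE_nat)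
  let ?ps = "map orbit [i..<j]"
  have "\<forall>k. Suc k < length ?ps \<longrightarrow> R (?ps ! k) (?ps ! Suc k)"
    using orbit_R by (simp add: add.commute)
  moreover have "R (last ?ps) (hd ?ps)"
    using orbit_R[of "j - 1"] ij by (simp add: last_map hd_map)
  moreover have "?ps \<noteq> []" "set ?ps \<subseteq> F"
    using ij orbit_F by auto
  ultimately show ?thesis
    using that by blast
qed

context kgraph
begin

lemma kg_comp_list_path:
  assumes "bs \<noteq> []" "set bs \<subseteq> arr" "\<forall>i. Suc i < length bs \<longrightarrow> src (bs ! i) = rng (bs ! Suc i)"
  shows "kg_comp_list G bs \<in> arr \<and> rng (kg_comp_list G bs) = rng (hd bs) \<and>
    src (kg_comp_list G bs) = src (last bs)"
  using assms
proof (induction bs rule: induct_list012)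
  case (3 b b' bs)
  have "src b = rng b'"
    using "3.prems"(3) by (metis length_Cons nth_Cons_0 nth_Cons_Suc zero_less_Suc Suc_less_eq)
  moreover have "\<forall>i. Suc i < length (b' # bs) \<longrightarrow> src ((b' # bs) ! i) = rng ((b' # bs) ! Suc i)"
    using "3.prems"(3) by (metis length_Cons nth_Cons_Suc Suc_less_eq)
  ultimately show ?case
    using "3.IH"(2) "3.prems"(2) by (simp add: comp_arr)
qed simp_all

end

context central_normal_form
begin

lemma src_is_range_of_term:
  assumes "(\<sigma>, \<tau>) \<in> F"
  shows "\<exists>(\<alpha>, \<beta>)\<in>F. rng \<alpha> = rng \<beta> \<and> rng \<beta> = src \<sigma> \<and> src \<sigma> = src \<tau>"
  using src_in_range_vertices[OF assms] src_eq[OF assms] rng_fst_eq_rng_snd by force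

lemma closed_path_exists:
  assumes "F \<noteq> {}"
  shows "\<exists>ps. ps \<noteq> [] \<and> set ps \<subseteq> F
          \<and> (\<forall>i. Suc i < length ps \<longrightarrow> src (snd (ps ! i)) = rng (snd (ps ! Suc i)))
          \<and> rng (kg_comp_list G (map snd ps)) = src (kg_comp_list G (map snd ps))"
proof -
  have "\<exists>q'\<in>F. src (snd q) = rng (snd q')" if "q \<in> F" for q
    using src_is_range_of_term[of "fst q" "snd q"] that by force
  then obtain ps where ps: "ps \<noteq> []" "set ps \<subseteq> F"
    "\<forall>i. Suc i < length ps \<longrightarrow> src (snd (ps ! i)) = rng (snd (ps ! Suc i))"
    "src (snd (last ps)) = rng (snd (hd ps))"
    using finite_successor_cycle[OF finite_F, of _ "\<lambda>q q'. src (snd q) = rng (snd q')"] assms by blast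
  have "set (map snd ps) \<subseteq> arr"
    using ps(2) F_subset by auto
  then have "rng (kg_comp_list G (map snd ps)) = src (kg_comp_list G (map snd ps))"
    using kg_comp_list_path[of "map snd ps"] ps by (simp add: hd_map last_map)
  with ps show ?thesis
    by blast
qed

end

definition normal_form_term ::
  "('a, 'k) kgraph \<Rightarrow> ('a \<times> 'a \<Rightarrow> 'r) \<Rightarrow> 'a \<times> 'a \<Rightarrow> 'a kpgen list \<Rightarrow> 'r::comm_ring_1" where
  "normal_form_term G c q =
     fa_mult (fa_mult (fa_mono (c q) []) (fa_mono 1 (sw G (fst q)))) (fa_mono 1 (swstar G (snd q)))"

lemma fa_act_finsum:
  assumes "finite A" "t \<in> A \<rightarrow> fa_carrier G"
  shows "fa_act G (finsum (free_alg G) t A) f = (\<lambda>p. \<Sum>q\<in>A. fa_act G (t q) f p)"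
proof -
  interpret ring "free_alg G" by (rule ring_free_alg)
  from assms show ?thesis
  proof (induction A rule: finite_induct)
    case empty
    show ?case
      unfolding finsum_empty by (simp add: fa_act_zero free_alg_def)
  next
    case (insert q A)
    then have "t \<in> A \<rightarrow> carrier (free_alg G)" "t q \<in> carrier (free_alg G)"
      by (auto simp: free_alg_def)
    moreover from this(1) have "finsum (free_alg G) t A \<in> fa_carrier G"
      using finsum_closed by (simp add: free_alg_def)
    ultimately show ?case
      using insert by (simp add: finsum_insert) (simp add: free_alg_def fa_act_add)
  qed
qed

definition normal_form_rep ::
  "('a, 'k) kgraph \<Rightarrow> ('a \<times> 'a \<Rightarrow> 'r) \<Rightarrow> ('a \<times> 'a) set \<Rightarrow> 'a kpgen list \<Rightarrow> 'r::comm_ring_1" where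
  "normal_form_rep G c F = finsum (free_alg G) (normal_form_term G c) F"

context kgraph
begin

lemma normal_form_term_closed: "fst q \<in> arr \<Longrightarrow> snd q \<in> arr \<Longrightarrow> normal_form_term G c q \<in> fa_carrier G"
  by (simp add: normal_form_term_def fa_mult_closed fa_mono_closed sw_valid swstar_valid)

lemma fa_act_normal_form_term:
  assumes "fst q \<in> arr" "snd q \<in> arr"
  shows "fa_act G (normal_form_term G c q) f =
    (\<lambda>p. c q * word_act G (sw G (fst q)) (word_act G (swstar G (snd q)) f) p)"
  using assms
  by (simp add: normal_form_term_def fa_act_mult fa_mult_closed fa_mono_closed sw_valid swstar_valid
                fa_act_mono word_act_scal)

lemma kp_class_normal_form_term:
  fixes c :: "'a \<times> 'a \<Rightarrow> 'r::comm_ring_1"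
  assumes "row_finite G" "fst q \<in> arr" "snd q \<in> arr"
  shows "kp_scal G (c q) \<otimes>\<^bsub>KP G\<^esub> kp_s G (fst q) \<otimes>\<^bsub>KP G\<^esub> kp_sstar G (snd q) =
    kp_class G (normal_form_term G c q)"
proof -
  interpret h: ring_hom_ring "free_alg G" "KP G :: ('a kpgen list \<Rightarrow> 'r) set ring" "kp_class G"
    by (rule ring_hom_ring_kp_class[OF assms(1)])
  let ?x = "fa_mono (c q) []" and ?y = "fa_mono 1 (sw G (fst q)) :: 'a kpgen list \<Rightarrow> 'r"
    and ?z = "fa_mono 1 (swstar G (snd q)) :: 'a kpgen list \<Rightarrow> 'r"
  have x: "?x \<in> carrier (free_alg G)" and y: "?y \<in> carrier (free_alg G)"
    and z: "?z \<in> carrier (free_alg G)"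
    using assms by (simp_all add: carrier_free_alg fa_mono_closed sw_valid swstar_valid)
  have "normal_form_term G c q = ?x \<otimes>\<^bsub>free_alg G\<^esub> ?y \<otimes>\<^bsub>free_alg G\<^esub> ?z"
    by (simp add: normal_form_term_def free_alg_def)
  moreover have "kp_class G (?x \<otimes>\<^bsub>free_alg G\<^esub> ?y \<otimes>\<^bsub>free_alg G\<^esub> ?z) =
      kp_class G ?x \<otimes>\<^bsub>KP G\<^esub> kp_class G ?y \<otimes>\<^bsub>KP G\<^esub> kp_class G ?z"
    using h.hom_mult[OF h.R.m_closed[OF x y] z] h.hom_mult[OF x y] by simp
  ultimately show ?thesis
    by (simp add: kp_scal_def kp_s_def kp_sstar_def)
qed

lemma normal_form_terms_closed: "F \<subseteq> arr \<times> arr \<Longrightarrow> normal_form_term G c \<in> F \<rightarrow> carrier (free_alg G)"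
  using normal_form_term_closed by (fastforce simp: carrier_free_alg)

lemma normal_form_rep_closed:
  assumes "F \<subseteq> arr \<times> arr"
  shows "normal_form_rep G c F \<in> fa_carrier G"
proof -
  interpret ring "free_alg G" by (rule ring_free_alg)
  show ?thesis
    using finsum_closed[OF normal_form_terms_closed[OF assms]]
    by (simp add: normal_form_rep_def carrier_free_alg)
qed

lemma fa_act_normal_form_rep:
  assumes "finite F" "F \<subseteq> arr \<times> arr"
  shows "fa_act G (normal_form_rep G c F) f = normal_form_act G F c f"
proof -
  have "normal_form_term G c \<in> F \<rightarrow> fa_carrier G"
    using normal_form_terms_closed[OF assms(2)] by (simp add: carrier_free_alg)
  moreover have "fa_act G (normal_form_term G c q) f p =
      c q * word_act G (sw G (fst q)) (word_act G (swstar G (snd q)) f) p" if "q \<in> F" for q p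
    using fa_act_normal_form_term[of q c f] that assms(2) by auto
  ultimately show ?thesis
    unfolding normal_form_rep_def normal_form_act_def
    by (simp add: fa_act_finsum[OF assms(1)] cong: sum.cong)
qed

lemma kp_class_normal_form_rep:
  fixes c :: "'a \<times> 'a \<Rightarrow> 'r::comm_ring_1"
  assumes "row_finite G" "F \<subseteq> arr \<times> arr"
  shows "(\<Oplus>\<^bsub>KP G\<^esub> q\<in>F. kp_scal G (c q) \<otimes>\<^bsub>KP G\<^esub> kp_s G (fst q) \<otimes>\<^bsub>KP G\<^esub> kp_sstar G (snd q)) =
    kp_class G (normal_form_rep G c F)"
proof -
  interpret h: ring_hom_ring "free_alg G" "KP G :: ('a kpgen list \<Rightarrow> 'r) set ring" "kp_class G"
    by (rule ring_hom_ring_kp_class[OF assms(1)])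
  have "kp_scal G (c q) \<otimes>\<^bsub>KP G\<^esub> kp_s G (fst q) \<otimes>\<^bsub>KP G\<^esub> kp_sstar G (snd q) =
      (kp_class G \<circ> normal_form_term G c) q" if "q \<in> F" for q
    using kp_class_normal_form_term[OF assms(1), of q c] that assms(2) by auto
  then show ?thesis
    unfolding normal_form_rep_def h.hom_finsum[OF normal_form_terms_closed[OF assms(2)]]
    using normal_form_terms_closed[OF assms(2), of c] h.hom_closed
    by (intro h.S.finsum_cong') (auto simp: Pi_def)
qed

end

theorem lemma4p2:
  fixes G :: "('a, 'k::finite) kgraph"
    and a :: "('a kpgen list \<Rightarrow> 'r::comm_ring_1) set"
    and F :: "('a \<times> 'a) set"
    and c :: "'a \<times> 'a \<Rightarrow> 'r"
    and m :: "'k \<Rightarrow> nat"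
  assumes "is_kgraph G" and "row_finite G" and "no_sources G"
    and "a \<in> kp_center G" and "a \<noteq> \<zero>\<^bsub>KP G\<^esub>"
    and "finite F"
    and "F \<subseteq> kg_arr G \<times> {b \<in> kg_arr G. kg_deg G b = m}"
    and "\<forall>p\<in>F. c p \<noteq> 0"
    and "\<forall>(\<alpha>, \<beta>)\<in>F. kg_src G \<alpha> = kg_src G \<beta>"
    and "a = (\<Oplus>\<^bsub>KP G\<^esub> p\<in>F. kp_scal G (c p) \<otimes>\<^bsub>KP G\<^esub> kp_s G (fst p)
                                \<otimes>\<^bsub>KP G\<^esub> kp_sstar G (snd p))"
  shows "(\<forall>(\<sigma>, \<tau>)\<in>F. kg_rng G \<sigma> = kg_rng G \<tau>)
    \<and> (\<forall>\<mu>\<in>kg_arr G. kg_src G \<mu> \<in> kg_rng G ` snd ` F \<longrightarrow> kg_rng G \<mu> \<in> kg_rng G ` snd ` F)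
    \<and> (\<forall>(\<sigma>, \<tau>)\<in>F. \<exists>(\<alpha>, \<beta>)\<in>F. kg_rng G \<alpha> = kg_rng G \<beta> \<and> kg_rng G \<beta> = kg_src G \<sigma>
                                   \<and> kg_src G \<sigma> = kg_src G \<tau>)
    \<and> (\<exists>ps. ps \<noteq> [] \<and> set ps \<subseteq> F
          \<and> (\<forall>i. Suc i < length ps \<longrightarrow> kg_src G (snd (ps ! i)) = kg_rng G (snd (ps ! Suc i)))
          \<and> kg_rng G (kg_comp_list G (map snd ps)) = kg_src G (kg_comp_list G (map snd ps)))"
proof -
  interpret kgraph G by (rule kgraph.intro) fact
  interpret KP: ring "KP G :: ('a kpgen list \<Rightarrow> 'r) set ring"
    using ring_hom_ring_kp_class[OF assms(2)] by (rule ring_hom_ring.axioms(2))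
  have F: "F \<subseteq> arr \<times> arr"
    using assms(7) by auto
  have "a = kp_class G (normal_form_rep G c F)"
    using kp_class_normal_form_rep[OF assms(2) F] assms(10) by simp
  then have "eventually_zero G (\<lambda>p. normal_form_act G F c (word_act G u f) p -
      word_act G u (normal_form_act G F c f) p)" if "set u \<subseteq> Collect (valid_gen G)" for u f
    using central_commutator_eventually_zero[OF assms(2) normal_form_rep_closed[OF F] _ that] assms(4)
    by (simp add: fa_act_normal_form_rep[OF assms(6) F])
  then interpret central_normal_form G F c m
    using assms by unfold_locales auto
  have "F \<noteq> {}"
    using assms(5,10) by auto
  then show ?thesis
    using rng_fst_eq_rng_snd rng_in_range_vertices src_is_range_of_term closed_path_exists by blast
qed

end
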